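(* Let $(M,\cdot,1)$ be a monoid without a zero element, $\Sigma$ a finite alphabet, $(g_h,h)$ a maximal factorization on $L$, and $\ell\in L$. If $N^{(g_h,h)}(h(\ell),g_h(\ell))$ is an $M$-DFA (i.e. its state set $\{S^{(g_h,h)}_\alpha(h(\ell))\mid\alpha\in\Sigma^*\}$ is finite), then it is a minimal $M$-DFA recognizing $\ell$.
   Context: $L$ is the set of all functions $\Sigma^*\to M$; $\varepsilon$ the empty word; $(m\cdot\ell)(\gamma)=m\cdot\ell(\gamma)$; $\Delta_\alpha(\ell)(\gamma)=\ell(\alpha\gamma)$. A factorization on $L$ is a pair $g:L\to M$, $f:L\to L$ with $g(\ell)\cdot f(\ell)=\ell$ for all $\ell$. A maximal factorization is a factorization $(g_h,h)$ with $h(m\cdot\ell)=h(\ell)$ for all $\ell\in L$, $m\in M$. Define $S^{(g,f)}_\varepsilon=\mathrm{id}_L$, $S^{(g,f)}_{\alpha\sigma}=f\circ\Delta_\sigma\circ S^{(g,f)}_\alpha$. $N^{(g,f)}(\ell,m)$ is the automaton with states $S^{(g,f)}_\alpha(\ell)$ ($\alpha\in\Sigma^*$), initial state $\ell$, initial value $m$, $\delta(S^{(g,f)}_\alpha(\ell),\sigma)=S^{(g,f)}_{\alpha\sigma}(\ell)$, $w(S^{(g,f)}_\alpha(\ell),\sigma)=g(\Delta_\sigma(S^{(g,f)}_\alpha(\ell)))$, $\rho(S^{(g,f)}_\alpha(\ell))=(S^{(g,f)}_\alpha(\ell))(\varepsilon)$. An $M$-DFA is $(Q,\Sigma,u,i_u,\delta,w,\rho)$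 with $Q$ finite nonempty, initial state $u$, initial value $i_u$, $\delta:Q\times\Sigma\to Q$, $w:Q\times\Sigma\to M$, $\rho:Q\to M$; with $q\alpha$ the extended transition and $w^*(q,\varepsilon)=1$, $w^*(q,\alpha\sigma)=w^*(q,\alpha)\cdot w(q\alpha,\sigma)$, it recognizes $\alpha\mapsto i_u\cdot w^*(u,\alpha)\cdot\rho(u\alpha)$. Minimal: no $M$-DFA recognizing the same language has fewer states. *)

theory Defs
  imports Main
begin

definition has_zero :: "'m::monoid_mult itself \<Rightarrow> bool" where
  "has_zero _ \<longleftrightarrow> (\<exists>z::'m. \<forall>m. z * m = z \<and> m * z = z)"

definition lscale :: "'m::monoid_mult \<Rightarrow> ('a list \<Rightarrow> 'm) \<Rightarrow> ('a list \<Rightarrow> 'm)" where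
  "lscale m l = (\<lambda>\<gamma>. m * l \<gamma>)"

definition Delta :: "'a list \<Rightarrow> ('a list \<Rightarrow> 'm) \<Rightarrow> ('a list \<Rightarrow> 'm)" where
  "Delta \<alpha> l = (\<lambda>\<gamma>. l (\<alpha> @ \<gamma>))"

definition factorization ::
  "(('a list \<Rightarrow> 'm::monoid_mult) \<Rightarrow> 'm) \<Rightarrow> (('a list \<Rightarrow> 'm) \<Rightarrow> ('a list \<Rightarrow> 'm)) \<Rightarrow> bool" where
  "factorization g f \<longleftrightarrow> (\<forall>l. lscale (g l) (f l) = l)"

definition maximal_factorization ::
  "(('a list \<Rightarrow> 'm::monoid_mult) \<Rightarrow> 'm) \<Rightarrow> (('a list \<Rightarrow> 'm) \<Rightarrow> ('a list \<Rightarrow> 'm)) \<Rightarrow> bool" where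
  "maximal_factorization g h \<longleftrightarrow> factorization g h \<and> (\<forall>l m. h (lscale m l) = h l)"

definition Sfun :: "(('a list \<Rightarrow> 'm) \<Rightarrow> ('a list \<Rightarrow> 'm)) \<Rightarrow> 'a list \<Rightarrow> ('a list \<Rightarrow> 'm) \<Rightarrow> ('a list \<Rightarrow> 'm)" where
  "Sfun f \<alpha> = foldl (\<lambda>S \<sigma>. f \<circ> Delta [\<sigma>] \<circ> S) id \<alpha>"

definition is_MDFA :: "'q set \<Rightarrow> 'q \<Rightarrow> 'm \<Rightarrow> ('q \<Rightarrow> 'a \<Rightarrow> 'q) \<Rightarrow> ('q \<Rightarrow> 'a \<Rightarrow> 'm) \<Rightarrow> ('q \<Rightarrow> 'm) \<Rightarrow> bool" where
  "is_MDFA Q u iu \<delta> w \<rho> \<longleftrightarrow> finite Q \<and> Q \<noteq> {} \<and> u \<in> Q \<and> (\<forall>q\<in>Q. \<forall>\<sigma>. \<delta> q \<sigma> \<in> Q)"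

definition ext_trans :: "('q \<Rightarrow> 'a \<Rightarrow> 'q) \<Rightarrow> 'q \<Rightarrow> 'a list \<Rightarrow> 'q" where
  "ext_trans \<delta> q \<alpha> = foldl \<delta> q \<alpha>"

text \<open>w_star_rev on the reversed word: w*(q,eps)=1, w*(q,alpha sigma)=w*(q,alpha) * w(q alpha, sigma).\<close>
primrec w_star_rev :: "('q \<Rightarrow> 'a \<Rightarrow> 'q) \<Rightarrow> ('q \<Rightarrow> 'a \<Rightarrow> 'm::monoid_mult) \<Rightarrow> 'q \<Rightarrow> 'a list \<Rightarrow> 'm" where
  "w_star_rev \<delta> w q [] = 1"
| "w_star_rev \<delta> w q (\<sigma> # \<beta>) = w_star_rev \<delta> w q \<beta> * w (ext_trans \<delta> q (rev \<beta>)) \<sigma>"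

definition w_star :: "('q \<Rightarrow> 'a \<Rightarrow> 'q) \<Rightarrow> ('q \<Rightarrow> 'a \<Rightarrow> 'm::monoid_mult) \<Rightarrow> 'q \<Rightarrow> 'a list \<Rightarrow> 'm" where
  "w_star \<delta> w q \<alpha> = w_star_rev \<delta> w q (rev \<alpha>)"

definition MDFA_lang :: "'q \<Rightarrow> 'm::monoid_mult \<Rightarrow> ('q \<Rightarrow> 'a \<Rightarrow> 'q) \<Rightarrow> ('q \<Rightarrow> 'a \<Rightarrow> 'm) \<Rightarrow> ('q \<Rightarrow> 'm) \<Rightarrow> 'a list \<Rightarrow> 'm" where
  "MDFA_lang u iu \<delta> w \<rho> = (\<lambda>\<alpha>. iu * w_star \<delta> w u \<alpha> * \<rho> (ext_trans \<delta> u \<alpha>))"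

text \<open>The automaton N^{(g,f)}(l,m).  Transitions are given as functions of the state:
  delta(S_alpha(l),sigma) = S_{alpha sigma}(l) = f(Delta_sigma(S_alpha(l))).\<close>
definition N_states :: "(('a list \<Rightarrow> 'm) \<Rightarrow> ('a list \<Rightarrow> 'm)) \<Rightarrow> ('a list \<Rightarrow> 'm) \<Rightarrow> ('a list \<Rightarrow> 'm) set" where
  "N_states f l = {Sfun f \<alpha> l | \<alpha>. True}"

definition N_delta :: "(('a list \<Rightarrow> 'm) \<Rightarrow> ('a list \<Rightarrow> 'm)) \<Rightarrow> ('a list \<Rightarrow> 'm) \<Rightarrow> 'a \<Rightarrow> ('a list \<Rightarrow> 'm)" where
  "N_delta f q \<sigma> = f (Delta [\<sigma>] q)"

definition N_w :: "(('a list \<Rightarrow> 'm) \<Rightarrow> 'm) \<Rightarrow> ('a list \<Rightarrow> 'm) \<Rightarrow> 'a \<Rightarrow> 'm" where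
  "N_w g q \<sigma> = g (Delta [\<sigma>] q)"

definition N_rho :: "('a list \<Rightarrow> 'm) \<Rightarrow> 'm" where
  "N_rho q = q []"

end

theory Submission
  imports Defs
begin

text \<open>
  For a maximal factorization \<open>(g, h)\<close> the states of \<open>N(h \<ell>, g \<ell>)\<close> are exactly the normalized
  residuals \<open>h (\<Delta>\<^sub>\<alpha> \<ell>)\<close>, and \<open>\<ell>\<close> is recovered along every path because \<open>g x \<cdot> h x = x\<close>.
  In any M-DFA recognizing \<open>\<ell>\<close>, the residual \<open>\<Delta>\<^sub>\<alpha> \<ell>\<close> is a scalar multiple of the language
  recognized from the state reached by \<open>\<alpha>\<close>; since \<open>h\<close> ignores scalars, \<open>h (\<Delta>\<^sub>\<alpha> \<ell>)\<close> is a
  function of that state, so there are at least as many states as normalized residuals.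
\<close>

lemma Delta_Nil [simp]: "Delta [] l = l"
  by (simp add: Delta_def)

lemma Delta_Delta: "Delta \<alpha> (Delta \<beta> l) = Delta (\<beta> @ \<alpha>) l"
  by (simp add: Delta_def)

lemma Delta_lscale: "Delta \<alpha> (lscale m l) = lscale m (Delta \<alpha> l)"
  by (simp add: Delta_def lscale_def)

lemma lscale_lscale: "lscale a (lscale b l) = lscale (a * b) l"
  by (simp add: lscale_def mult.assoc)

lemma Sfun_Nil [simp]: "Sfun f [] = id"
  by (simp add: Sfun_def)

lemma Sfun_snoc: "Sfun f (\<alpha> @ [\<sigma>]) = f \<circ> Delta [\<sigma>] \<circ> Sfun f \<alpha>"
  by (simp add: Sfun_def)

lemma ext_trans_Nil [simp]: "ext_trans \<delta> q [] = q"
  by (simp add: ext_trans_def)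

lemma ext_trans_append: "ext_trans \<delta> q (\<alpha> @ \<beta>) = ext_trans \<delta> (ext_trans \<delta> q \<alpha>) \<beta>"
  by (simp add: ext_trans_def)

lemma ext_trans_snoc: "ext_trans \<delta> q (\<alpha> @ [\<sigma>]) = \<delta> (ext_trans \<delta> q \<alpha>) \<sigma>"
  by (simp add: ext_trans_def)

lemma w_star_Nil [simp]: "w_star \<delta> w q [] = 1"
  by (simp add: w_star_def)

lemma w_star_snoc: "w_star \<delta> w q (\<alpha> @ [\<sigma>]) = w_star \<delta> w q \<alpha> * w (ext_trans \<delta> q \<alpha>) \<sigma>"
  by (simp add: w_star_def)

lemma w_star_append:
  "w_star \<delta> w q (\<alpha> @ \<beta>) = w_star \<delta> w q \<alpha> * w_star \<delta> w (ext_trans \<delta> q \<alpha>) \<beta>"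
proof (induction \<beta> rule: rev_induct)
  case Nil
  then show ?case by simp
next
  case (snoc \<sigma> \<beta>)
  have "w_star \<delta> w q (\<alpha> @ \<beta> @ [\<sigma>]) = w_star \<delta> w q (\<alpha> @ \<beta>) * w (ext_trans \<delta> q (\<alpha> @ \<beta>)) \<sigma>"
    using w_star_snoc[of \<delta> w q "\<alpha> @ \<beta>"] by simp
  with snoc show ?case
    by (simp add: w_star_snoc ext_trans_append mult.assoc)
qed

lemma ext_trans_in_MDFA:
  assumes "is_MDFA Q u iu \<delta> w \<rho>"
  shows "ext_trans \<delta> u \<alpha> \<in> Q"
  using assms by (induction \<alpha> rule: rev_induct) (auto simp: is_MDFA_def ext_trans_snoc)

lemma Delta_MDFA_lang:
  "Delta \<alpha> (MDFA_lang u iu \<delta> w \<rho>)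
     = lscale (iu * w_star \<delta> w u \<alpha>) (MDFA_lang (ext_trans \<delta> u \<alpha>) 1 \<delta> w \<rho>)"
  by (simp add: Delta_def lscale_def MDFA_lang_def w_star_append ext_trans_append mult.assoc)

lemma ext_trans_N_delta: "ext_trans (N_delta f) q \<alpha> = Sfun f \<alpha> q"
  by (induction \<alpha> rule: rev_induct) (simp_all add: ext_trans_snoc Sfun_snoc N_delta_def)

lemma is_MDFA_N:
  assumes "finite (N_states f q)"
  shows "is_MDFA (N_states f q) q m (N_delta f) (N_w g) N_rho"
proof -
  have "q \<in> N_states f q"
    unfolding N_states_def by (auto intro: exI[of _ "[]"])
  moreover have "N_delta f (Sfun f \<alpha> q) \<sigma> \<in> N_states f q" for \<alpha> \<sigma>
    using Sfun_snoc[of f \<alpha> \<sigma>] unfolding N_states_def N_delta_def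
    by (auto intro: exI[of _ "\<alpha> @ [\<sigma>]"])
  ultimately show ?thesis
    using assms by (auto simp: is_MDFA_def N_states_def)
qed

lemma factorization_Delta_eq_N:
  assumes "factorization g f"
  shows "Delta \<alpha> l = lscale (g l * w_star (N_delta f) (N_w g) (f l) \<alpha>) (Sfun f \<alpha> (f l))"
proof (induction \<alpha> rule: rev_induct)
  case Nil
  then show ?case using assms by (simp add: factorization_def)
next
  case (snoc \<sigma> \<alpha>)
  let ?q = "Sfun f \<alpha> (f l)"
  have "Delta (\<alpha> @ [\<sigma>]) l = Delta [\<sigma>] (Delta \<alpha> l)"
    by (simp add: Delta_Delta)
  also have "\<dots> = lscale (g l * w_star (N_delta f) (N_w g) (f l) \<alpha>) (Delta [\<sigma>] ?q)"
    using snoc by (simp add: Delta_lscale)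
  also have "Delta [\<sigma>] ?q = lscale (g (Delta [\<sigma>] ?q)) (f (Delta [\<sigma>] ?q))"
    using assms by (simp add: factorization_def)
  finally show ?case
    by (simp add: lscale_lscale w_star_snoc ext_trans_N_delta N_w_def Sfun_snoc mult.assoc)
qed

lemma factorization_MDFA_lang_N:
  assumes "factorization g f"
  shows "MDFA_lang (f l) (g l) (N_delta f) (N_w g) N_rho = l"
proof
  fix \<alpha>
  have "l \<alpha> = Delta \<alpha> l []"
    by (simp add: Delta_def)
  also have "\<dots> = g l * w_star (N_delta f) (N_w g) (f l) \<alpha> * Sfun f \<alpha> (f l) []"
    by (subst factorization_Delta_eq_N[OF assms]) (simp add: lscale_def)
  finally show "MDFA_lang (f l) (g l) (N_delta f) (N_w g) N_rho \<alpha> = l \<alpha>"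
    by (simp add: MDFA_lang_def ext_trans_N_delta N_rho_def)
qed

lemma maximal_factorization_h_Delta_h:
  assumes "maximal_factorization g h"
  shows "h (Delta \<alpha> (h x)) = h (Delta \<alpha> x)"
proof -
  have "h (Delta \<alpha> x) = h (Delta \<alpha> (lscale (g x) (h x)))"
    using assms by (simp add: maximal_factorization_def factorization_def)
  also have "\<dots> = h (Delta \<alpha> (h x))"
    using assms by (simp add: Delta_lscale maximal_factorization_def)
  finally show ?thesis by simp
qed

lemma maximal_factorization_Sfun:
  assumes "maximal_factorization g h"
  shows "Sfun h \<alpha> (h l) = h (Delta \<alpha> l)"
  by (induction \<alpha> rule: rev_induct)
    (simp_all add: Sfun_snoc Delta_Delta maximal_factorization_h_Delta_h[OF assms])

lemma maximal_factorization_card_N_states_le: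
  assumes "maximal_factorization g h"
    and "is_MDFA Q u iu \<delta> w \<rho>"
    and "MDFA_lang u iu \<delta> w \<rho> = l"
  shows "card (N_states h (h l)) \<le> card Q"
proof -
  let ?F = "\<lambda>q. h (MDFA_lang q 1 \<delta> w \<rho>)"
  have "N_states h (h l) \<subseteq> ?F ` Q"
  proof
    fix s assume "s \<in> N_states h (h l)"
    then obtain \<alpha> where "s = h (Delta \<alpha> l)"
      by (auto simp: N_states_def maximal_factorization_Sfun[OF assms(1)])
    also have "\<dots> = ?F (ext_trans \<delta> u \<alpha>)"
      using assms(1) by (simp add: assms(3)[symmetric] Delta_MDFA_lang maximal_factorization_def)
    finally show "s \<in> ?F ` Q"
      using ext_trans_in_MDFA[OF assms(2)] by blast
  qed
  moreover have "finite Q"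
    using assms(2) by (simp add: is_MDFA_def)
  ultimately show ?thesis
    by (meson card_image_le card_mono finite_imageI le_trans)
qed

theorem mainTheorem12:
  fixes g :: "('a::finite list \<Rightarrow> 'm::monoid_mult) \<Rightarrow> 'm"
    and h :: "('a list \<Rightarrow> 'm) \<Rightarrow> ('a list \<Rightarrow> 'm)"
    and l :: "'a list \<Rightarrow> 'm"
  assumes "\<not> has_zero TYPE('m)"
    and "maximal_factorization g h"
    and "finite (N_states h (h l))"
  shows "is_MDFA (N_states h (h l)) (h l) (g l) (N_delta h) (N_w g) N_rho
       \<and> MDFA_lang (h l) (g l) (N_delta h) (N_w g) N_rho = l
       \<and> (\<forall>(Q :: 'q set) u iu \<delta> w \<rho>. is_MDFA Q u iu \<delta> w \<rho> \<and> MDFA_lang u iu \<delta> w \<rho> = l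
            \<longrightarrow> card (N_states h (h l)) \<le> card Q)"
proof (intro conjI allI impI)
  show "is_MDFA (N_states h (h l)) (h l) (g l) (N_delta h) (N_w g) N_rho"
    using assms(3) by (rule is_MDFA_N)
  show "MDFA_lang (h l) (g l) (N_delta h) (N_w g) N_rho = l"
    using assms(2) by (simp add: maximal_factorization_def factorization_MDFA_lang_N)
next
  fix Q :: "'q set" and u iu \<delta> w \<rho>
  assume "is_MDFA Q u iu \<delta> w \<rho> \<and> MDFA_lang u iu \<delta> w \<rho> = l"
  then show "card (N_states h (h l)) \<le> card Q"
    by (elim conjE) (rule maximal_factorization_card_N_states_le[OF assms(2)])
qed

end
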